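(* Let $\Phi:\mathbb{R}\times(-\epsilon,\epsilon)\to\mathbb{R}^2$ be an orientation-preserving $C^2$ diffeomorphism onto a domain $\Omega\subset\mathbb{R}^2$, and write $\Phi(\sigma;t)=(x(\sigma;t),\,y(\sigma;t))$. For each $t\in(-\epsilon,\epsilon)$ let $\gamma_t$ be the curve $\sigma\mapsto\Phi(\sigma;t)$. Define \[ \varphi=\frac{\det d\Phi}{\|\gamma_t'\|}\quad\text{and}\quad \mathbf{N}=\frac{(-\partial y/\partial\sigma)\,\mathbf{e}_1+(\partial x/\partial\sigma)\,\mathbf{e}_2}{\|\gamma_t'\|}, \] let $s$ be the arc-length parameter (modulo an additive constant) along each integral curve of $\mathbf{N}$, and for $p\in\Omega$ let $\kappa(p)$ be the signed curvature at $p$ of the curve $\gamma_t$ on which $p$ lies, signed in accordance with the normal field $\mathbf{N}$. Then there exists a critical-point-free harmonic function $U$ on $\Omega$ whose family of level curves is $\{\gamma_t\mid t\in(-\epsilon,\epsilon)\}$ if and only if $\frac{\partial\varphi}{\partial s}+\kappa\varphi$ is constant on each curve $\gamma_t$, i.e. \[ \frac{\partial}{\partial\sigma}\left(\frac{\partial\varphi}{\partial s}+\kappa\varphi\right)\equiv 0 . \]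
   Context: Here $\det d\Phi$ is the Jacobian determinant of $\Phi$ at $(\sigma;t)$ and $\|\gamma_t'\|=\|\partial\Phi/\partial\sigma\|$, so $\varphi$ and $\mathbf{N}$ are functions on $\mathbb{R}\times(-\epsilon,\epsilon)$, transported to $\Omega$ via $\Phi$ when needed. Signed curvature: with unit tangent $\mathbf{T}$ of $\gamma_t$ chosen so that $(\mathbf{T},\mathbf{N})$ is a positively oriented frame, $\kappa$ is defined by $d\mathbf{T}/d\ell=\kappa\mathbf{N}$, where $\ell$ is arc length along $\gamma_t$. The quantity $\frac{\partial\varphi}{\partial s}+\kappa\varphi$ is regarded as a function on $\mathbb{R}\times(-\epsilon,\epsilon)$: for $q$ there, $(\kappa\varphi)(q)=\kappa(\Phi(q))\varphi(q)$, and if $\alpha:(-\delta,\delta)\to\Omega$ is the unit-speed integral curve of $\mathbf{N}$ with $\alpha(0)=\Phi(q)$, then $\frac{\partial\varphi}{\partial s}(q)=\frac{d}{ds}\big|_{s=0}\varphi(\Phi^{-1}(\alpha(s)))$. "Level-curve family $\{\gamma_t\}$" means the level sets of $U$ in $\Omega$ are exactly the curves $\gamma_t$. *)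

theory Defs
  imports "HOL-Analysis.Analysis"
begin

definition C1_on :: "'a::real_normed_vector set \<Rightarrow> ('a \<Rightarrow> 'b::real_normed_vector) \<Rightarrow> bool" where
  "C1_on S f \<longleftrightarrow> (\<exists>f'. (\<forall>p\<in>S. (f has_derivative blinfun_apply (f' p)) (at p)) \<and> continuous_on S f')"

definition C2_on :: "'a::real_normed_vector set \<Rightarrow> ('a \<Rightarrow> 'b::real_normed_vector) \<Rightarrow> bool" where
  "C2_on S f \<longleftrightarrow> (\<exists>f'. (\<forall>p\<in>S. (f has_derivative blinfun_apply (f' p)) (at p)) \<and> C1_on S f')"

definition partial1 :: "(real \<times> real \<Rightarrow> 'b::real_normed_vector) \<Rightarrow> real \<times> real \<Rightarrow> 'b" where
  "partial1 f p = vector_derivative (\<lambda>a. f (a, snd p)) (at (fst p))"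

definition partial2 :: "(real \<times> real \<Rightarrow> 'b::real_normed_vector) \<Rightarrow> real \<times> real \<Rightarrow> 'b" where
  "partial2 f p = vector_derivative (\<lambda>b. f (fst p, b)) (at (snd p))"

definition jac :: "(real \<times> real \<Rightarrow> real \<times> real) \<Rightarrow> real \<times> real \<Rightarrow> real" where
  "jac \<Phi> q = fst (partial1 \<Phi> q) * snd (partial2 \<Phi> q) - fst (partial2 \<Phi> q) * snd (partial1 \<Phi> q)"

definition phi :: "(real \<times> real \<Rightarrow> real \<times> real) \<Rightarrow> real \<times> real \<Rightarrow> real" where
  "phi \<Phi> q = jac \<Phi> q / norm (partial1 \<Phi> q)"

definition tangent :: "(real \<times> real \<Rightarrow> real \<times> real) \<Rightarrow> real \<times> real \<Rightarrow> real \<times> real" where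
  "tangent \<Phi> q = inverse (norm (partial1 \<Phi> q)) *\<^sub>R partial1 \<Phi> q"

definition normal :: "(real \<times> real \<Rightarrow> real \<times> real) \<Rightarrow> real \<times> real \<Rightarrow> real \<times> real" where
  "normal \<Phi> q = inverse (norm (partial1 \<Phi> q)) *\<^sub>R (- snd (partial1 \<Phi> q), fst (partial1 \<Phi> q))"

text \<open>Signed curvature of \<open>\<gamma>_t\<close> at \<open>\<Phi>(q)\<close>: \<open>dT/d\<ell> = \<kappa> N\<close> with \<open>d\<ell> = \<parallel>\<gamma>_t'\<parallel> d\<sigma>\<close>;
  since \<open>N\<close> is a unit vector this is \<open>\<kappa> = (dT/d\<sigma> \<bullet> N)/\<parallel>\<gamma>_t'\<parallel>\<close>.  Regarded as a function
  on the parameter domain, i.e. \<open>kappa \<Phi> q = \<kappa>(\<Phi> q)\<close>.\<close>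
definition kappa :: "(real \<times> real \<Rightarrow> real \<times> real) \<Rightarrow> real \<times> real \<Rightarrow> real" where
  "kappa \<Phi> q = (partial1 (tangent \<Phi>) q \<bullet> normal \<Phi> q) / norm (partial1 \<Phi> q)"

text \<open>Derivative of \<open>\<phi>\<close> with respect to arc length \<open>s\<close> along the integral curves of \<open>N\<close>:
  the derivative of \<open>\<phi> \<circ> \<Phi>\<^sup>-\<^sup>1\<close> at \<open>\<Phi>(q)\<close> in the (unit) direction \<open>N(q)\<close>.\<close>
definition dphi_ds :: "(real \<times> real) set \<Rightarrow> (real \<times> real \<Rightarrow> real \<times> real) \<Rightarrow> real \<times> real \<Rightarrow> real" where
  "dphi_ds D \<Phi> q = frechet_derivative (phi \<Phi> \<circ> inv_into D \<Phi>) (at (\<Phi> q)) (normal \<Phi> q)"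

definition harmonic_on :: "(real \<times> real) set \<Rightarrow> (real \<times> real \<Rightarrow> real) \<Rightarrow> bool" where
  "harmonic_on S U \<longleftrightarrow> C2_on S U \<and>
     (\<forall>p\<in>S. partial1 (partial1 U) p + partial2 (partial2 U) p = 0)"

definition critical_point_free_on :: "(real \<times> real) set \<Rightarrow> (real \<times> real \<Rightarrow> real) \<Rightarrow> bool" where
  "critical_point_free_on S U \<longleftrightarrow> (\<forall>p\<in>S. (partial1 U p, partial2 U p) \<noteq> (0, 0))"

end

theory Submission
  imports Defs
begin

text \<open>
  Let \<open>\<tau> = snd \<circ> \<Phi>\<^sup>-\<^sup>1\<close>, whose level sets are the curves \<open>\<gamma>\<^sub>t\<close>.  A critical-point-free \<open>U\<close>
  with these level sets is constant on each \<open>\<gamma>\<^sub>t\<close>, i.e. \<open>U = f \<circ> \<tau>\<close>, and then \<open>\<nabla>U = f' \<nabla>\<tau>\<close>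
  forces \<open>f' \<noteq> 0\<close>.  Working in the parameter domain one finds \<open>\<nabla>\<tau> = N/\<phi>\<close> and
  \<open>\<Delta>\<tau> = -(\<partial>\<phi>/\<partial>s + \<kappa>\<phi>)/\<phi>\<^sup>2\<close>, so with \<open>K = \<partial>\<phi>/\<partial>s + \<kappa>\<phi>\<close> we get
  \<open>\<Delta>(f \<circ> \<tau>) = (f''(t) - f'(t) K(\<sigma>,t)) / \<phi>\<^sup>2\<close> at \<open>\<Phi>(\<sigma>,t)\<close>.  Hence harmonicity means
  \<open>K(\<sigma>,t) = f''(t)/f'(t)\<close>, which does not depend on \<open>\<sigma>\<close>.  Conversely, if \<open>K\<close> depends on
  \<open>t\<close> only, a primitive \<open>f\<close> of \<open>exp (\<integral> K(0,t) dt)\<close> is strictly increasing, and \<open>f \<circ> \<tau>\<close> is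
  harmonic, critical-point-free and has the curves \<open>\<gamma>\<^sub>t\<close> as level sets.
\<close>

section \<open>Calculus on the plane\<close>

lemma C2_onE:
  assumes "C2_on S f"
  obtains f' f'' where "\<And>p. p \<in> S \<Longrightarrow> (f has_derivative blinfun_apply (f' p)) (at p)"
    and "\<And>p. p \<in> S \<Longrightarrow> (f' has_derivative blinfun_apply (f'' p)) (at p)"
    and "continuous_on S f''"
  using assms unfolding C2_on_def C1_on_def by metis

lemma C2_onI:
  assumes "\<And>p. p \<in> S \<Longrightarrow> (f has_derivative blinfun_apply (f' p)) (at p)"
    and "\<And>p. p \<in> S \<Longrightarrow> (f' has_derivative blinfun_apply (f'' p)) (at p)"
    and "continuous_on S f''"
  shows "C2_on S f"
  using assms unfolding C2_on_def C1_on_def by blast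

lemma linear_plane_expansion:
  fixes f :: "real \<times> real \<Rightarrow> 'b::real_vector"
  assumes "linear f"
  shows "f h = fst h *\<^sub>R f (1, 0) + snd h *\<^sub>R f (0, 1)"
proof -
  have "h = fst h *\<^sub>R (1, 0) + snd h *\<^sub>R (0, 1)" by (cases h) simp
  then show ?thesis by (metis linear_add[OF assms] linear_scale[OF assms])
qed

lemma has_derivative_plane_expansion:
  assumes "(f has_derivative f') F"
  shows "(f has_derivative (\<lambda>h. fst h *\<^sub>R f' (1, 0) + snd h *\<^sub>R f' (0, 1))) F"
  by (rule has_derivative_eq_rhs[OF assms])
    (rule ext, rule linear_plane_expansion[OF has_derivative_linear[OF assms]])

lemma has_derivative_divide_plane:
  fixes f g :: "real \<times> real \<Rightarrow> real"
  assumes f: "(f has_derivative (\<lambda>h. fst h * f\<sigma> + snd h * ft)) (at q)"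
    and g: "(g has_derivative (\<lambda>h. fst h * g\<sigma> + snd h * gt)) (at q)"
    and "g q \<noteq> 0"
  shows "((\<lambda>x. f x / g x) has_derivative
           (\<lambda>h. fst h * ((f\<sigma> * g q - f q * g\<sigma>) / (g q)\<^sup>2) + snd h * ((ft * g q - f q * gt) / (g q)\<^sup>2)))
         (at q)"
  by (rule has_derivative_eq_rhs[OF has_derivative_divide[OF f g assms(3)]])
    (use assms(3) in \<open>simp add: fun_eq_iff field_simps power2_eq_square\<close>)

lemma partial1_eq_derivative:
  assumes "(f has_derivative f') (at p)"
  shows "partial1 f p = f' (1, 0)"
proof -
  have "((\<lambda>a. (a, snd p)) has_derivative (\<lambda>h. (h, 0))) (at (fst p))"
    by (auto intro!: derivative_eq_intros)
  moreover have "(f has_derivative f') (at (fst p, snd p))"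
    using assms by simp
  ultimately have "((\<lambda>a. f (a, snd p)) has_derivative (\<lambda>h. f' (h, 0))) (at (fst p))"
    by (rule has_derivative_compose)
  moreover have "(\<lambda>h. f' (h, 0)) = (\<lambda>h. h *\<^sub>R f' (1, 0))"
  proof
    fix h :: real
    show "f' (h, 0) = h *\<^sub>R f' (1, 0)"
      using linear_scale[OF has_derivative_linear[OF assms], of h "(1, 0)"] by simp
  qed
  ultimately show ?thesis
    unfolding partial1_def by (intro vector_derivative_at) (simp add: has_vector_derivative_def)
qed

lemma partial2_eq_derivative:
  assumes "(f has_derivative f') (at p)"
  shows "partial2 f p = f' (0, 1)"
proof -
  have "((\<lambda>b. (fst p, b)) has_derivative (\<lambda>h. (0, h))) (at (snd p))"
    by (auto intro!: derivative_eq_intros)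
  moreover have "(f has_derivative f') (at (fst p, snd p))"
    using assms by simp
  ultimately have "((\<lambda>b. f (fst p, b)) has_derivative (\<lambda>h. f' (0, h))) (at (snd p))"
    by (rule has_derivative_compose)
  moreover have "(\<lambda>h. f' (0, h)) = (\<lambda>h. h *\<^sub>R f' (0, 1))"
  proof
    fix h :: real
    show "f' (0, h) = h *\<^sub>R f' (0, 1)"
      using linear_scale[OF has_derivative_linear[OF assms], of h "(0, 1)"] by simp
  qed
  ultimately show ?thesis
    unfolding partial2_def by (intro vector_derivative_at) (simp add: has_vector_derivative_def)
qed

lemma partials_eq_derivative_on_open:
  assumes "(f has_derivative f') (at p)" "open S" "p \<in> S" "\<And>x. x \<in> S \<Longrightarrow> g x = f x"
  shows "partial1 g p = f' (1, 0)" "partial2 g p = f' (0, 1)"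
proof -
  have "(g has_derivative f') (at p)"
    using has_derivative_transform_within_open[OF assms(1-3)] assms(4) by metis
  then show "partial1 g p = f' (1, 0)" "partial2 g p = f' (0, 1)"
    by (rule partial1_eq_derivative partial2_eq_derivative)+
qed

lemma gradient_compose_real:
  fixes \<tau> :: "real \<times> real \<Rightarrow> real"
  assumes S: "open S" "p \<in> S" and U: "\<And>x. x \<in> S \<Longrightarrow> U x = f (\<tau> x)"
    and \<tau>: "(\<tau> has_derivative (\<lambda>h. fst h * P + snd h * Q)) (at p)"
    and f: "(f has_real_derivative f1) (at (\<tau> p))"
  shows "partial1 U p = f1 * P" "partial2 U p = f1 * Q"
proof -
  have "((\<lambda>x. f (\<tau> x)) has_derivative (\<lambda>h. f1 * (fst h * P + snd h * Q))) (at p)"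
    using has_derivative_compose[OF \<tau> f[unfolded has_field_derivative_def]] by (simp add: mult.commute)
  from partials_eq_derivative_on_open[OF this S U] show "partial1 U p = f1 * P" "partial2 U p = f1 * Q"
    by simp_all
qed

lemma laplacian_compose_real:
  fixes \<tau> :: "real \<times> real \<Rightarrow> real"
  assumes S: "open S" "p \<in> S" and U: "\<And>x. x \<in> S \<Longrightarrow> U x = f (\<tau> x)"
    and \<tau>: "\<And>x. x \<in> S \<Longrightarrow> (\<tau> has_derivative (\<lambda>h. fst h * P x + snd h * Q x)) (at x)"
    and P: "(P has_derivative P') (at p)" and Q: "(Q has_derivative Q') (at p)"
    and f: "\<And>x. x \<in> S \<Longrightarrow> (f has_real_derivative f1 (\<tau> x)) (at (\<tau> x))"
    and f1: "(f1 has_real_derivative f2) (at (\<tau> p))"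
  shows "partial1 (partial1 U) p + partial2 (partial2 U) p
           = f2 * ((P p)\<^sup>2 + (Q p)\<^sup>2) + f1 (\<tau> p) * (P' (1, 0) + Q' (0, 1))"
proof -
  have f1\<tau>: "((\<lambda>x. f1 (\<tau> x)) has_derivative (\<lambda>h. f2 * (fst h * P p + snd h * Q p))) (at p)"
    using has_derivative_compose[OF \<tau>[OF S(2)] f1[unfolded has_field_derivative_def]]
    by (simp add: mult.commute)
  have "partial1 (partial1 U) p = f2 * (P p * P p) + f1 (\<tau> p) * P' (1, 0)"
    using partials_eq_derivative_on_open(1)[OF has_derivative_mult[OF f1\<tau> P] S(1,2),
        of "partial1 U"] gradient_compose_real(1)[OF S(1) _ U \<tau> f] by (simp add: algebra_simps)
  moreover have "partial2 (partial2 U) p = f2 * (Q p * Q p) + f1 (\<tau> p) * Q' (0, 1)"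
    using partials_eq_derivative_on_open(2)[OF has_derivative_mult[OF f1\<tau> Q] S(1,2),
        of "partial2 U"] gradient_compose_real(2)[OF S(1) _ U \<tau> f] by (simp add: algebra_simps)
  ultimately show ?thesis by (simp add: power2_eq_square algebra_simps)
qed

lemma exists_antiderivative_greaterThanLessThan:
  fixes g :: "real \<Rightarrow> real"
  assumes "continuous_on {a<..<b} g"
  shows "\<exists>G. \<forall>x\<in>{a<..<b}. (G has_real_derivative g x) (at x)"
proof (cases "a < b")
  case True
  have "isCont g x" if "ereal a < ereal x" "ereal x < ereal b" for x
    using assms that by (auto simp: continuous_on_eq_continuous_at)
  then obtain G where "\<forall>x. ereal a < ereal x \<longrightarrow> ereal x < ereal b \<longrightarrow> (G has_vector_derivative g x) (at x)"
    using einterval_antiderivative[of "ereal a" "ereal b" g] True by auto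
  then have "\<forall>x\<in>{a<..<b}. (G has_real_derivative g x) (at x)"
    by (simp add: has_real_derivative_iff_has_vector_derivative)
  then show ?thesis by blast
qed simp

lemma C2_on_bounded_linear_compose:
  fixes g :: "'a::real_normed_vector \<Rightarrow> 'b::real_normed_vector"
  assumes L: "bounded_linear L" and g: "C2_on S g"
  shows "C2_on S (\<lambda>x. L (g x))"
proof -
  obtain g1 g2 where g1: "\<And>p. p \<in> S \<Longrightarrow> (g has_derivative blinfun_apply (g1 p)) (at p)"
    and g2: "\<And>p. p \<in> S \<Longrightarrow> (g1 has_derivative blinfun_apply (g2 p)) (at p)"
    and cont: "continuous_on S g2"
    using g by (rule C2_onE) blast
  interpret compose: bounded_bilinear "blinfun_compose :: ('b \<Rightarrow>\<^sub>L 'c) \<Rightarrow> ('a \<Rightarrow>\<^sub>L 'b) \<Rightarrow> _"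
    by (rule bounded_bilinear_blinfun_compose)
  define M where "M = compose.prod_right (Blinfun L)"
  have "((\<lambda>x. L (g x)) has_derivative blinfun_apply (Blinfun L o\<^sub>L g1 p)) (at p)" if "p \<in> S" for p
    by (rule has_derivative_eq_rhs[OF bounded_linear.has_derivative[OF L g1[OF that]]])
      (simp add: fun_eq_iff bounded_linear_Blinfun_apply[OF L])
  moreover have "((\<lambda>p. Blinfun L o\<^sub>L g1 p) has_derivative blinfun_apply (M o\<^sub>L g2 p)) (at p)" if "p \<in> S" for p
    unfolding M_def
    by (rule has_derivative_eq_rhs[OF compose.FDERIV[OF has_derivative_const g2[OF that]]])
      (simp add: fun_eq_iff)
  moreover have "continuous_on S (\<lambda>p. M o\<^sub>L g2 p)"
    by (intro continuous_intros cont)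
  ultimately show ?thesis
    by (rule C2_onI)
qed

lemma C2_on_compose_real:
  fixes \<tau> :: "'a::real_normed_vector \<Rightarrow> real"
  assumes \<tau>: "C2_on S \<tau>" and img: "\<tau> ` S \<subseteq> T"
    and f: "\<And>t. t \<in> T \<Longrightarrow> (f has_real_derivative f1 t) (at t)"
    and f1: "\<And>t. t \<in> T \<Longrightarrow> (f1 has_real_derivative f2 t) (at t)"
    and f2: "continuous_on T f2"
  shows "C2_on S (\<lambda>x. f (\<tau> x))"
proof -
  obtain \<tau>1 \<tau>2 where d\<tau>: "\<And>p. p \<in> S \<Longrightarrow> (\<tau> has_derivative blinfun_apply (\<tau>1 p)) (at p)"
    and d\<tau>1: "\<And>p. p \<in> S \<Longrightarrow> (\<tau>1 has_derivative blinfun_apply (\<tau>2 p)) (at p)"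
    and c\<tau>2: "continuous_on S \<tau>2"
    using \<tau> by (rule C2_onE) blast
  have c\<tau>: "continuous_on S \<tau>" and c\<tau>1: "continuous_on S \<tau>1"
    using d\<tau> d\<tau>1 by (auto intro!: continuous_at_imp_continuous_on has_derivative_continuous)
  have cf1: "continuous_on T f1"
    using f1 by (auto intro!: continuous_at_imp_continuous_on DERIV_isCont)
  define U2 where "U2 p = f1 (\<tau> p) *\<^sub>R \<tau>2 p + f2 (\<tau> p) *\<^sub>R (blinfun_scaleR_left (\<tau>1 p) o\<^sub>L \<tau>1 p)" for p
  have d_f1\<tau>: "((\<lambda>x. f1 (\<tau> x)) has_derivative (\<lambda>h. f2 (\<tau> p) * \<tau>1 p h)) (at p)" if "p \<in> S" for p
    using has_derivative_compose[OF d\<tau>[OF that] f1[unfolded has_field_derivative_def]] img that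
    by (auto simp: mult.commute)
  have "((\<lambda>x. f (\<tau> x)) has_derivative blinfun_apply (f1 (\<tau> p) *\<^sub>R \<tau>1 p)) (at p)" if "p \<in> S" for p
    using img that
    by (intro has_derivative_eq_rhs[OF has_derivative_compose[OF d\<tau>[OF that] f[unfolded has_field_derivative_def]]])
      (auto simp: fun_eq_iff blinfun.scaleR_left)
  moreover have "((\<lambda>p. f1 (\<tau> p) *\<^sub>R \<tau>1 p) has_derivative blinfun_apply (U2 p)) (at p)" if "p \<in> S" for p
    by (rule has_derivative_eq_rhs[OF has_derivative_scaleR[OF d_f1\<tau>[OF that] d\<tau>1[OF that]]])
      (simp add: fun_eq_iff U2_def blinfun.add_left blinfun.scaleR_left)
  moreover have "continuous_on S U2"
    unfolding U2_def
    by (intro continuous_intros c\<tau>1 c\<tau>2 continuous_on_compose2[OF cf1 c\<tau> img]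
        continuous_on_compose2[OF f2 c\<tau> img])
  ultimately show ?thesis
    by (rule C2_onI)
qed

lemma derivative_along_curve_differentiable:
  fixes U :: "'a::real_normed_vector \<Rightarrow> real"
  assumes U: "C2_on S U" and c: "\<And>t. t \<in> T \<Longrightarrow> c t \<in> S"
    and c': "\<And>t. t \<in> T \<Longrightarrow> (c has_vector_derivative c' t) (at t)"
    and c'_differentiable: "\<And>t. t \<in> T \<Longrightarrow> c' differentiable (at t)"
  shows "\<exists>f1. \<forall>t\<in>T. ((\<lambda>t. U (c t)) has_real_derivative f1 t) (at t) \<and> f1 differentiable (at t)"
proof -
  obtain U1 U2 where dU: "\<And>p. p \<in> S \<Longrightarrow> (U has_derivative blinfun_apply (U1 p)) (at p)"
    and dU1: "\<And>p. p \<in> S \<Longrightarrow> (U1 has_derivative blinfun_apply (U2 p)) (at p)"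
    and "continuous_on S U2"
    using U by (rule C2_onE) blast
  have "((\<lambda>t. U (c t)) has_real_derivative U1 (c t) (c' t)) (at t)" if "t \<in> T" for t
    unfolding has_field_derivative_def
    by (rule has_derivative_eq_rhs[OF has_derivative_compose[OF
          c'[OF that, unfolded has_vector_derivative_def] dU[OF c[OF that]]]])
      (simp add: fun_eq_iff blinfun.scaleR_right mult.commute)
  moreover have "(\<lambda>t. U1 (c t) (c' t)) differentiable (at t)" if t: "t \<in> T" for t
  proof -
    obtain c'' where "(c' has_derivative c'') (at t)"
      using c'_differentiable[OF t] unfolding differentiable_def by blast
    with has_derivative_compose[OF c'[OF t, unfolded has_vector_derivative_def] dU1[OF c[OF t]]]
    show ?thesis
      by (intro differentiableI) (rule blinfun.FDERIV)
  qed
  ultimately show ?thesis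
    by (intro exI[of _ "\<lambda>t. U1 (c t) (c' t)"]) blast
qed

lemma exists_injective_solution_f''_eq_g_f':
  fixes g :: "real \<Rightarrow> real"
  assumes g: "continuous_on {a<..<b} g"
  obtains f f1 where "\<And>t. t \<in> {a<..<b} \<Longrightarrow> (f has_real_derivative f1 t) (at t)"
    and "\<And>t. t \<in> {a<..<b} \<Longrightarrow> (f1 has_real_derivative f1 t * g t) (at t)"
    and "\<And>t. f1 t > 0" and "continuous_on {a<..<b} f1" and "inj_on f {a<..<b}"
proof -
  obtain G where G: "\<And>t. t \<in> {a<..<b} \<Longrightarrow> (G has_real_derivative g t) (at t)"
    using exists_antiderivative_greaterThanLessThan[OF g] by blast
  define f1 where "f1 t = exp (G t)" for t
  have f1: "(f1 has_real_derivative f1 t * g t) (at t)" if "t \<in> {a<..<b}" for t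
    unfolding f1_def[abs_def] using G[OF that] by (auto intro!: derivative_eq_intros)
  have cont: "continuous_on {a<..<b} f1"
    by (rule continuous_at_imp_continuous_on) (use f1 DERIV_isCont in blast)
  obtain f where f: "\<And>t. t \<in> {a<..<b} \<Longrightarrow> (f has_real_derivative f1 t) (at t)"
    using exists_antiderivative_greaterThanLessThan[OF cont] by blast
  have mono: "f s < f t" if "s \<in> {a<..<b}" "t \<in> {a<..<b}" "s < t" for s t
  proof (rule DERIV_pos_imp_increasing[OF \<open>s < t\<close>])
    fix x assume "s \<le> x" "x \<le> t"
    with that have "x \<in> {a<..<b}" by auto
    then show "\<exists>y. (f has_real_derivative y) (at x) \<and> 0 < y"
      using f exp_gt_zero unfolding f1_def by blast
  qed
  have inj: "inj_on f {a<..<b}"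
    by (rule inj_onI) (metis mono less_irrefl linorder_neqE)
  have pos: "f1 t > 0" for t
    by (simp add: f1_def)
  show ?thesis
    by (rule that[OF f f1 pos cont inj])
qed

section \<open>Level curves of a parametrisation\<close>

locale level_curve_parametrisation =
  fixes \<Phi> :: "real \<times> real \<Rightarrow> real \<times> real" and \<epsilon> :: real and \<Omega> :: "(real \<times> real) set"
    and D :: "(real \<times> real) set"
    and \<Phi>' :: "real \<times> real \<Rightarrow> (real \<times> real) \<Rightarrow>\<^sub>L (real \<times> real)"
    and \<Phi>'' :: "real \<times> real \<Rightarrow> (real \<times> real) \<Rightarrow>\<^sub>L (real \<times> real) \<Rightarrow>\<^sub>L (real \<times> real)"
  assumes D_eq: "D = UNIV \<times> {-\<epsilon><..<\<epsilon>}"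
    and has_derivative_\<Phi>: "\<And>q. q \<in> D \<Longrightarrow> (\<Phi> has_derivative blinfun_apply (\<Phi>' q)) (at q)"
    and has_derivative_\<Phi>': "\<And>q. q \<in> D \<Longrightarrow> (\<Phi>' has_derivative blinfun_apply (\<Phi>'' q)) (at q)"
    and continuous_on_\<Phi>'': "continuous_on D \<Phi>''"
    and inj_\<Phi>: "inj_on \<Phi> D"
    and image_\<Phi>: "\<Phi> ` D = \<Omega>"
    and C2_inverse: "C2_on \<Omega> (inv_into D \<Phi>)"
    and jac_pos: "\<And>q. q \<in> D \<Longrightarrow> jac \<Phi> q > 0"
begin

abbreviation "\<Psi> \<equiv> inv_into D \<Phi>"

definition "\<tau> p = snd (\<Psi> p)"

lemma mem_D [simp]: "(\<sigma>, t) \<in> D \<longleftrightarrow> t \<in> {-\<epsilon><..<\<epsilon>}"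
  by (simp add: D_eq)

lemma open_D: "open D"
  unfolding D_eq by (intro open_Times) auto

lemma open_\<Omega>: "open \<Omega>"
proof -
  have "continuous_on D \<Phi>"
    using has_derivative_\<Phi> by (auto intro!: continuous_at_imp_continuous_on has_derivative_continuous)
  then show ?thesis
    using invariance_of_domain[OF _ open_D inj_\<Phi>] image_\<Phi> by simp
qed

lemma \<Psi>_\<Phi> [simp]: "q \<in> D \<Longrightarrow> \<Psi> (\<Phi> q) = q"
  using inj_\<Phi> by simp

lemma \<Phi>_\<Psi> [simp]: "p \<in> \<Omega> \<Longrightarrow> \<Phi> (\<Psi> p) = p"
  using image_\<Phi> by (auto intro: f_inv_into_f)

lemma \<Psi>_in_D: "p \<in> \<Omega> \<Longrightarrow> \<Psi> p \<in> D"
  using image_\<Phi> by (auto intro: inv_into_into)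

lemma \<Phi>_in_\<Omega>: "q \<in> D \<Longrightarrow> \<Phi> q \<in> \<Omega>"
  using image_\<Phi> by auto

lemma \<tau>_\<Phi> [simp]: "q \<in> D \<Longrightarrow> \<tau> (\<Phi> q) = snd q"
  by (simp add: \<tau>_def)

lemma snd_in: "q \<in> D \<Longrightarrow> snd q \<in> {-\<epsilon><..<\<epsilon>}"
  using D_eq by (auto simp: mem_Times_iff)

lemma \<tau>_in: "p \<in> \<Omega> \<Longrightarrow> \<tau> p \<in> {-\<epsilon><..<\<epsilon>}"
  unfolding \<tau>_def by (intro snd_in \<Psi>_in_D)

lemma image_\<tau>: "\<tau> ` \<Omega> = {-\<epsilon><..<\<epsilon>}"
proof (intro equalityI subsetI)
  fix t assume "t \<in> {-\<epsilon><..<\<epsilon>}"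
  then show "t \<in> \<tau> ` \<Omega>"
    using \<Phi>_in_\<Omega>[of "(0, t)"] \<tau>_\<Phi>[of "(0, t)"] by (auto intro: rev_image_eqI)
qed (auto dest: \<tau>_in)

definition "x\<sigma> q = fst (\<Phi>' q (1, 0))"
definition "y\<sigma> q = snd (\<Phi>' q (1, 0))"
definition "xt q = fst (\<Phi>' q (0, 1))"
definition "yt q = snd (\<Phi>' q (0, 1))"

text \<open>\<open>x\<sigma>t\<close> is the \<open>t\<close>-derivative of \<open>x\<sigma>\<close> and \<open>xt\<sigma>\<close> the \<open>\<sigma>\<close>-derivative of \<open>xt\<close>.\<close>

definition "x\<sigma>\<sigma> q = fst (\<Phi>'' q (1, 0) (1, 0))"
definition "y\<sigma>\<sigma> q = snd (\<Phi>'' q (1, 0) (1, 0))"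
definition "x\<sigma>t q = fst (\<Phi>'' q (0, 1) (1, 0))"
definition "y\<sigma>t q = snd (\<Phi>'' q (0, 1) (1, 0))"
definition "xt\<sigma> q = fst (\<Phi>'' q (1, 0) (0, 1))"
definition "yt\<sigma> q = snd (\<Phi>'' q (1, 0) (0, 1))"
definition "xtt q = fst (\<Phi>'' q (0, 1) (0, 1))"
definition "ytt q = snd (\<Phi>'' q (0, 1) (0, 1))"

definition "J q = x\<sigma> q * yt q - xt q * y\<sigma> q"
definition "J\<sigma> q = x\<sigma>\<sigma> q * yt q + x\<sigma> q * yt\<sigma> q - xt\<sigma> q * y\<sigma> q - xt q * y\<sigma>\<sigma> q"
definition "Jt q = x\<sigma>t q * yt q + x\<sigma> q * ytt q - xtt q * y\<sigma> q - xt q * y\<sigma>t q"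

definition "L q = sqrt ((x\<sigma> q)\<^sup>2 + (y\<sigma> q)\<^sup>2)"
definition "L\<sigma> q = (x\<sigma> q * x\<sigma>\<sigma> q + y\<sigma> q * y\<sigma>\<sigma> q) / L q"
definition "Lt q = (x\<sigma> q * x\<sigma>t q + y\<sigma> q * y\<sigma>t q) / L q"

definition "\<phi>\<sigma> q = (J\<sigma> q * L q - J q * L\<sigma> q) / (L q)\<^sup>2"
definition "\<phi>t q = (Jt q * L q - J q * Lt q) / (L q)\<^sup>2"

lemma \<Phi>'_apply: "\<Phi>' q h = (fst h * x\<sigma> q + snd h * xt q, fst h * y\<sigma> q + snd h * yt q)"
  by (subst linear_plane_expansion[OF bounded_linear.linear[OF blinfun.bounded_linear_right]])
    (simp add: x\<sigma>_def y\<sigma>_def xt_def yt_def prod_eq_iff)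

lemma partials_\<Phi>:
  assumes "q \<in> D"
  shows "partial1 \<Phi> q = (x\<sigma> q, y\<sigma> q)" "partial2 \<Phi> q = (xt q, yt q)"
  using partial1_eq_derivative[OF has_derivative_\<Phi>[OF assms]]
    partial2_eq_derivative[OF has_derivative_\<Phi>[OF assms]]
  by (simp_all add: \<Phi>'_apply)

lemma J_pos: "q \<in> D \<Longrightarrow> J q > 0"
  using jac_pos[of q] by (simp add: jac_def partials_\<Phi> J_def)

lemma J_nonzero [simp]: "q \<in> D \<Longrightarrow> J q \<noteq> 0"
  using J_pos by fastforce

lemma L_pos:
  assumes "q \<in> D" shows "L q > 0"
proof -
  have "x\<sigma> q \<noteq> 0 \<or> y\<sigma> q \<noteq> 0"
    using J_pos[OF assms] by (auto simp: J_def)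
  then show ?thesis
    by (simp add: L_def sum_power2_gt_zero_iff)
qed

lemma L_nonzero [simp]: "q \<in> D \<Longrightarrow> L q \<noteq> 0"
  using L_pos by fastforce

lemma L_squared: "(L q)\<^sup>2 = (x\<sigma> q)\<^sup>2 + (y\<sigma> q)\<^sup>2"
  by (simp add: L_def)

lemma norm_partial1_\<Phi>: "q \<in> D \<Longrightarrow> norm (partial1 \<Phi> q) = L q"
  by (simp add: partials_\<Phi> L_def norm_Pair)

lemma norm_x\<sigma>_y\<sigma>: "norm (x\<sigma> q, y\<sigma> q) = L q"
  by (simp add: L_def norm_Pair)

lemma phi_eq: "q \<in> D \<Longrightarrow> phi \<Phi> q = J q / L q"
  by (simp add: phi_def jac_def partials_\<Phi> J_def norm_x\<sigma>_y\<sigma>)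

lemma tangent_eq: "q \<in> D \<Longrightarrow> tangent \<Phi> q = (x\<sigma> q / L q, y\<sigma> q / L q)"
  by (simp add: tangent_def partials_\<Phi> norm_x\<sigma>_y\<sigma> divide_inverse mult.commute)

lemma normal_eq: "q \<in> D \<Longrightarrow> normal \<Phi> q = (- y\<sigma> q / L q, x\<sigma> q / L q)"
  by (simp add: normal_def partials_\<Phi> norm_x\<sigma>_y\<sigma> divide_inverse mult.commute)

lemma has_derivative_first_partials:
  assumes "q \<in> D"
  shows "(x\<sigma> has_derivative (\<lambda>h. fst h * x\<sigma>\<sigma> q + snd h * x\<sigma>t q)) (at q)"
    and "(y\<sigma> has_derivative (\<lambda>h. fst h * y\<sigma>\<sigma> q + snd h * y\<sigma>t q)) (at q)"
    and "(xt has_derivative (\<lambda>h. fst h * xt\<sigma> q + snd h * xtt q)) (at q)"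
    and "(yt has_derivative (\<lambda>h. fst h * yt\<sigma> q + snd h * ytt q)) (at q)"
proof -
  have column: "((\<lambda>q. \<Phi>' q v) has_derivative
      (\<lambda>h. fst h *\<^sub>R \<Phi>'' q (1, 0) v + snd h *\<^sub>R \<Phi>'' q (0, 1) v)) (at q)" for v
    by (rule has_derivative_eq_rhs[OF has_derivative_plane_expansion[OF
          blinfun.FDERIV[OF has_derivative_\<Phi>'[OF assms] has_derivative_const]]])
      (simp add: blinfun.add_left blinfun.scaleR_left)
  show "(x\<sigma> has_derivative (\<lambda>h. fst h * x\<sigma>\<sigma> q + snd h * x\<sigma>t q)) (at q)"
    "(y\<sigma> has_derivative (\<lambda>h. fst h * y\<sigma>\<sigma> q + snd h * y\<sigma>t q)) (at q)"
    "(xt has_derivative (\<lambda>h. fst h * xt\<sigma> q + snd h * xtt q)) (at q)"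
    "(yt has_derivative (\<lambda>h. fst h * yt\<sigma> q + snd h * ytt q)) (at q)"
    unfolding x\<sigma>_def[abs_def] y\<sigma>_def[abs_def] xt_def[abs_def] yt_def[abs_def]
      x\<sigma>\<sigma>_def x\<sigma>t_def y\<sigma>\<sigma>_def y\<sigma>t_def xt\<sigma>_def xtt_def yt\<sigma>_def ytt_def
    using has_derivative_fst[OF column] has_derivative_snd[OF column] by simp_all
qed

lemma has_derivative_J:
  assumes "q \<in> D"
  shows "(J has_derivative (\<lambda>h. fst h * J\<sigma> q + snd h * Jt q)) (at q)"
  unfolding J_def[abs_def]
  by (rule has_derivative_eq_rhs[OF has_derivative_diff[OF
        has_derivative_mult[OF has_derivative_first_partials(1,4)[OF assms]]
        has_derivative_mult[OF has_derivative_first_partials(3,2)[OF assms]]]])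
    (simp add: fun_eq_iff J\<sigma>_def Jt_def algebra_simps)

lemma has_derivative_L:
  assumes q: "q \<in> D"
  shows "(L has_derivative (\<lambda>h. fst h * L\<sigma> q + snd h * Lt q)) (at q)"
proof -
  have sq: "((\<lambda>q. (x\<sigma> q)\<^sup>2 + (y\<sigma> q)\<^sup>2) has_derivative
      (\<lambda>h. 2 * (fst h * (x\<sigma> q * x\<sigma>\<sigma> q + y\<sigma> q * y\<sigma>\<sigma> q) + snd h * (x\<sigma> q * x\<sigma>t q + y\<sigma> q * y\<sigma>t q)))) (at q)"
    by (rule has_derivative_eq_rhs[OF has_derivative_add[OF
          has_derivative_power[OF has_derivative_first_partials(1)[OF q]]
          has_derivative_power[OF has_derivative_first_partials(2)[OF q]]]])
      (simp add: fun_eq_iff algebra_simps)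
  have "(sqrt has_real_derivative inverse (L q) / 2) (at ((x\<sigma> q)\<^sup>2 + (y\<sigma> q)\<^sup>2))"
    using L_pos[OF q] unfolding L_def by (intro DERIV_real_sqrt) (simp add: sum_power2_gt_zero_iff)
  from has_derivative_compose[OF sq this[unfolded has_field_derivative_def]]
  show ?thesis
    unfolding L_def[abs_def, symmetric]
    by (rule has_derivative_eq_rhs) (use L_pos[OF q] in \<open>simp add: fun_eq_iff L\<sigma>_def Lt_def field_simps\<close>)
qed

lemma has_derivative_J_div_L:
  assumes "q \<in> D"
  shows "((\<lambda>q. J q / L q) has_derivative (\<lambda>h. fst h * \<phi>\<sigma> q + snd h * \<phi>t q)) (at q)"
  using has_derivative_divide_plane[OF has_derivative_J[OF assms] has_derivative_L[OF assms]] L_pos[OF assms]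
  by (simp add: \<phi>\<sigma>_def \<phi>t_def)

lemma kappa_eq:
  assumes q: "q \<in> D"
  shows "kappa \<Phi> q = (x\<sigma> q * y\<sigma>\<sigma> q - y\<sigma> q * x\<sigma>\<sigma> q) / (L q)^3"
proof -
  have "((\<lambda>q. (x\<sigma> q / L q, y\<sigma> q / L q)) has_derivative
      (\<lambda>h. (fst h * ((x\<sigma>\<sigma> q * L q - x\<sigma> q * L\<sigma> q) / (L q)\<^sup>2) + snd h * ((x\<sigma>t q * L q - x\<sigma> q * Lt q) / (L q)\<^sup>2),
            fst h * ((y\<sigma>\<sigma> q * L q - y\<sigma> q * L\<sigma> q) / (L q)\<^sup>2) + snd h * ((y\<sigma>t q * L q - y\<sigma> q * Lt q) / (L q)\<^sup>2)))) (at q)"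
    using L_pos[OF q]
    by (intro has_derivative_Pair has_derivative_divide_plane has_derivative_first_partials
        has_derivative_L q) simp_all
  from partials_eq_derivative_on_open(1)[OF this open_D q]
  have "partial1 (tangent \<Phi>) q = ((x\<sigma>\<sigma> q * L q - x\<sigma> q * L\<sigma> q) / (L q)\<^sup>2, (y\<sigma>\<sigma> q * L q - y\<sigma> q * L\<sigma> q) / (L q)\<^sup>2)"
    by (simp add: tangent_eq)
  then show ?thesis
    using L_pos[OF q]
    by (simp add: kappa_def normal_eq[OF q] norm_partial1_\<Phi>[OF q] field_simps power2_eq_square power3_eq_cube)
qed

definition "d\<Psi> q v = ((fst v * yt q - snd v * xt q) / J q, (x\<sigma> q * snd v - y\<sigma> q * fst v) / J q)"

lemma \<Phi>'_d\<Psi>: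
  assumes "q \<in> D"
  shows "\<Phi>' q (d\<Psi> q v) = v"
  using assms by (simp add: \<Phi>'_apply d\<Psi>_def prod_eq_iff divide_simps) (simp add: J_def algebra_simps)

lemma has_derivative_\<Psi>:
  assumes p: "p \<in> \<Omega>"
  shows "(\<Psi> has_derivative d\<Psi> (\<Psi> p)) (at p)"
proof -
  obtain \<Psi>' \<Psi>'' where d\<Psi>': "\<And>p. p \<in> \<Omega> \<Longrightarrow> (\<Psi> has_derivative blinfun_apply (\<Psi>' p)) (at p)"
    and "\<And>p. p \<in> \<Omega> \<Longrightarrow> (\<Psi>' has_derivative blinfun_apply (\<Psi>'' p)) (at p)"
    and "continuous_on \<Omega> \<Psi>''"
    using C2_inverse by (rule C2_onE) blast
  define q where "q = \<Psi> p"
  have q: "q \<in> D" "\<Phi> q = p"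
    using p by (simp_all add: q_def \<Psi>_in_D)
  have "((\<lambda>x. \<Psi> (\<Phi> x)) has_derivative (\<lambda>h. \<Psi>' p (\<Phi>' q h))) (at q)"
    using has_derivative_compose[OF has_derivative_\<Phi>[OF q(1)]] d\<Psi>'[OF p] q(2) by simp
  moreover have "((\<lambda>x. \<Psi> (\<Phi> x)) has_derivative (\<lambda>h. h)) (at q)"
    by (rule has_derivative_transform_within_open[OF has_derivative_ident open_D q(1)]) simp
  ultimately have "\<Psi>' p (\<Phi>' q h) = h" for h
    by (metis has_derivative_unique)
  then have "blinfun_apply (\<Psi>' p) = d\<Psi> q"
    using \<Phi>'_d\<Psi>[OF q(1)] by (metis ext)
  then show ?thesis
    using d\<Psi>'[OF p] by (simp add: q_def)
qed

lemma dphi_ds_eq: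
  assumes q: "q \<in> D"
  shows "dphi_ds D \<Phi> q = fst (d\<Psi> q (normal \<Phi> q)) * \<phi>\<sigma> q + snd (d\<Psi> q (normal \<Phi> q)) * \<phi>t q"
proof -
  have "(\<Psi> has_derivative d\<Psi> q) (at (\<Phi> q))"
    using has_derivative_\<Psi>[OF \<Phi>_in_\<Omega>[OF q]] q by simp
  moreover have "((\<lambda>q. J q / L q) has_derivative (\<lambda>h. fst h * \<phi>\<sigma> q + snd h * \<phi>t q)) (at (\<Psi> (\<Phi> q)))"
    using has_derivative_J_div_L[OF q] q by simp
  ultimately have "((\<lambda>p. J (\<Psi> p) / L (\<Psi> p)) has_derivative
      (\<lambda>v. fst (d\<Psi> q v) * \<phi>\<sigma> q + snd (d\<Psi> q v) * \<phi>t q)) (at (\<Phi> q))"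
    by (rule has_derivative_compose)
  then have "((phi \<Phi> \<circ> \<Psi>) has_derivative (\<lambda>v. fst (d\<Psi> q v) * \<phi>\<sigma> q + snd (d\<Psi> q v) * \<phi>t q)) (at (\<Phi> q))"
    by (rule has_derivative_transform_within_open[OF _ open_\<Omega> \<Phi>_in_\<Omega>[OF q]])
      (simp add: phi_eq \<Psi>_in_D)
  then show ?thesis
    unfolding dphi_ds_def by (simp add: frechet_derivative_at[symmetric])
qed

definition "K q = dphi_ds D \<Phi> q + kappa \<Phi> q * phi \<Phi> q"

lemma K_eq:
  assumes "q \<in> D"
  shows "K q = fst (d\<Psi> q (- y\<sigma> q / L q, x\<sigma> q / L q)) * \<phi>\<sigma> q
                + snd (d\<Psi> q (- y\<sigma> q / L q, x\<sigma> q / L q)) * \<phi>t q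
                + (x\<sigma> q * y\<sigma>\<sigma> q - y\<sigma> q * x\<sigma>\<sigma> q) / (L q)^3 * (J q / L q)"
  using assms by (simp add: K_def dphi_ds_eq kappa_eq phi_eq normal_eq)

lemma continuous_on_coordinates:
  shows "continuous_on D x\<sigma>" "continuous_on D y\<sigma>" "continuous_on D xt" "continuous_on D yt"
    and "continuous_on D x\<sigma>\<sigma>" "continuous_on D y\<sigma>\<sigma>" "continuous_on D x\<sigma>t" "continuous_on D y\<sigma>t"
    and "continuous_on D xt\<sigma>" "continuous_on D yt\<sigma>" "continuous_on D xtt" "continuous_on D ytt"
proof -
  have cont: "continuous_on D \<Phi>'"
    using has_derivative_\<Phi>' by (auto intro!: continuous_at_imp_continuous_on has_derivative_continuous)
  show "continuous_on D x\<sigma>" "continuous_on D y\<sigma>" "continuous_on D xt" "continuous_on D yt"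
    and "continuous_on D x\<sigma>\<sigma>" "continuous_on D y\<sigma>\<sigma>" "continuous_on D x\<sigma>t" "continuous_on D y\<sigma>t"
    and "continuous_on D xt\<sigma>" "continuous_on D yt\<sigma>" "continuous_on D xtt" "continuous_on D ytt"
    unfolding x\<sigma>_def[abs_def] y\<sigma>_def[abs_def] xt_def[abs_def] yt_def[abs_def]
      x\<sigma>\<sigma>_def[abs_def] y\<sigma>\<sigma>_def[abs_def] x\<sigma>t_def[abs_def] y\<sigma>t_def[abs_def]
      xt\<sigma>_def[abs_def] yt\<sigma>_def[abs_def] xtt_def[abs_def] ytt_def[abs_def]
    by (auto intro!: continuous_intros cont continuous_on_\<Phi>'')
qed

lemma continuous_on_K: "continuous_on D K"
proof -
  have J: "continuous_on D J" "continuous_on D J\<sigma>" "continuous_on D Jt"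
    unfolding J_def[abs_def] J\<sigma>_def[abs_def] Jt_def[abs_def]
    by (intro continuous_intros continuous_on_coordinates)+
  have L: "continuous_on D L"
    unfolding L_def[abs_def] by (intro continuous_intros continuous_on_coordinates)
  have L': "continuous_on D L\<sigma>" "continuous_on D Lt"
    unfolding L\<sigma>_def[abs_def] Lt_def[abs_def]
    by (auto intro!: continuous_intros continuous_on_coordinates L)
  have "continuous_on D (\<lambda>q. fst (d\<Psi> q (- y\<sigma> q / L q, x\<sigma> q / L q)) * \<phi>\<sigma> q
                + snd (d\<Psi> q (- y\<sigma> q / L q, x\<sigma> q / L q)) * \<phi>t q
                + (x\<sigma> q * y\<sigma>\<sigma> q - y\<sigma> q * x\<sigma>\<sigma> q) / (L q)^3 * (J q / L q))"
    unfolding d\<Psi>_def \<phi>\<sigma>_def \<phi>t_def fst_conv snd_conv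
    by (auto intro!: continuous_intros continuous_on_coordinates J L L')
  then show ?thesis
    by (rule continuous_on_eq) (simp add: K_eq)
qed

definition "\<tau>x q = - y\<sigma> q / J q"
definition "\<tau>y q = x\<sigma> q / J q"
definition "\<tau>x\<sigma> q = (y\<sigma> q * J\<sigma> q - y\<sigma>\<sigma> q * J q) / (J q)\<^sup>2"
definition "\<tau>xt q = (y\<sigma> q * Jt q - y\<sigma>t q * J q) / (J q)\<^sup>2"
definition "\<tau>y\<sigma> q = (x\<sigma>\<sigma> q * J q - x\<sigma> q * J\<sigma> q) / (J q)\<^sup>2"
definition "\<tau>yt q = (x\<sigma>t q * J q - x\<sigma> q * Jt q) / (J q)\<^sup>2"

lemma has_derivative_\<tau>:
  assumes p: "p \<in> \<Omega>"
  shows "(\<tau> has_derivative (\<lambda>h. fst h * \<tau>x (\<Psi> p) + snd h * \<tau>y (\<Psi> p))) (at p)"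
  unfolding \<tau>_def[abs_def]
  by (intro has_derivative_eq_rhs[OF has_derivative_snd[OF has_derivative_\<Psi>[OF p]]])
    (use \<Psi>_in_D[OF p] in \<open>simp add: fun_eq_iff d\<Psi>_def \<tau>x_def \<tau>y_def field_simps\<close>)

lemma has_derivative_gradient_\<tau>:
  assumes q: "q \<in> D"
  shows "((\<lambda>p. \<tau>x (\<Psi> p)) has_derivative (\<lambda>h. fst (d\<Psi> q h) * \<tau>x\<sigma> q + snd (d\<Psi> q h) * \<tau>xt q)) (at (\<Phi> q))"
    and "((\<lambda>p. \<tau>y (\<Psi> p)) has_derivative (\<lambda>h. fst (d\<Psi> q h) * \<tau>y\<sigma> q + snd (d\<Psi> q h) * \<tau>yt q)) (at (\<Phi> q))"
proof -
  have \<Psi>: "(\<Psi> has_derivative d\<Psi> q) (at (\<Phi> q))"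
    using has_derivative_\<Psi>[OF \<Phi>_in_\<Omega>[OF q]] q by simp
  have J: "J q \<noteq> 0"
    using q by simp
  have "((\<lambda>q. - y\<sigma> q) has_derivative (\<lambda>h. fst h * - y\<sigma>\<sigma> q + snd h * - y\<sigma>t q)) (at q)"
    by (rule has_derivative_eq_rhs[OF has_derivative_minus[OF has_derivative_first_partials(2)[OF q]]]) simp
  from has_derivative_divide_plane[OF this has_derivative_J[OF q] J]
  have "(\<tau>x has_derivative (\<lambda>h. fst h * \<tau>x\<sigma> q + snd h * \<tau>xt q)) (at (\<Psi> (\<Phi> q)))"
    unfolding \<tau>x_def[abs_def] \<tau>x\<sigma>_def \<tau>xt_def using q by (simp add: algebra_simps)
  from has_derivative_compose[OF \<Psi> this]
  show "((\<lambda>p. \<tau>x (\<Psi> p)) has_derivative (\<lambda>h. fst (d\<Psi> q h) * \<tau>x\<sigma> q + snd (d\<Psi> q h) * \<tau>xt q)) (at (\<Phi> q))" .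
  from has_derivative_divide_plane[OF has_derivative_first_partials(1)[OF q] has_derivative_J[OF q] J]
  have "(\<tau>y has_derivative (\<lambda>h. fst h * \<tau>y\<sigma> q + snd h * \<tau>yt q)) (at (\<Psi> (\<Phi> q)))"
    unfolding \<tau>y_def[abs_def] \<tau>y\<sigma>_def \<tau>yt_def using q by simp
  from has_derivative_compose[OF \<Psi> this]
  show "((\<lambda>p. \<tau>y (\<Psi> p)) has_derivative (\<lambda>h. fst (d\<Psi> q h) * \<tau>y\<sigma> q + snd (d\<Psi> q h) * \<tau>yt q)) (at (\<Phi> q))" .
qed

lemma norm_gradient_\<tau>: "(\<tau>x q)\<^sup>2 + (\<tau>y q)\<^sup>2 = (L q)\<^sup>2 / (J q)\<^sup>2"
  by (simp add: \<tau>x_def \<tau>y_def L_squared power_divide add_divide_distrib)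

text \<open>At \<open>\<Phi> q\<close> this is \<open>\<Delta>\<tau> = -(\<partial>\<phi>/\<partial>s + \<kappa>\<phi>)/\<phi>\<^sup>2\<close>, since \<open>\<phi> = J/L\<close>.\<close>
lemma laplacian_\<tau>_eq:
  assumes q: "q \<in> D"
  shows "fst (d\<Psi> q (1, 0)) * \<tau>x\<sigma> q + snd (d\<Psi> q (1, 0)) * \<tau>xt q
           + (fst (d\<Psi> q (0, 1)) * \<tau>y\<sigma> q + snd (d\<Psi> q (0, 1)) * \<tau>yt q)
         = - ((L q)\<^sup>2 / (J q)\<^sup>2) * K q"
proof -
  have J: "J q * inverse (J q) = 1" and L: "L q * inverse (L q) = 1"
    using q by simp_all
  show ?thesis
    unfolding K_eq[OF q] d\<Psi>_def \<tau>x\<sigma>_def \<tau>xt_def \<tau>y\<sigma>_def \<tau>yt_def \<phi>\<sigma>_def \<phi>t_def L\<sigma>_def Lt_def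
    apply (simp only: fst_conv snd_conv divide_inverse power_inverse[symmetric])
    using J L L_squared[of q] J_def[of q]
    apply algebra
    done
qed

lemma laplacian_compose_\<tau>:
  assumes U: "\<And>p. p \<in> \<Omega> \<Longrightarrow> U p = f (\<tau> p)"
    and f: "\<And>t. t \<in> {-\<epsilon><..<\<epsilon>} \<Longrightarrow> (f has_real_derivative f1 t) (at t)"
    and f1: "\<And>t. t \<in> {-\<epsilon><..<\<epsilon>} \<Longrightarrow> (f1 has_real_derivative f2 t) (at t)"
    and q: "q \<in> D"
  shows "partial1 U (\<Phi> q) = f1 (snd q) * \<tau>x q" "partial2 U (\<Phi> q) = f1 (snd q) * \<tau>y q"
    and "partial1 (partial1 U) (\<Phi> q) + partial2 (partial2 U) (\<Phi> q)
           = (L q)\<^sup>2 / (J q)\<^sup>2 * (f2 (snd q) - f1 (snd q) * K q)"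
proof -
  have p: "\<Phi> q \<in> \<Omega>"
    using q by (rule \<Phi>_in_\<Omega>)
  have f': "(f has_real_derivative f1 (\<tau> p)) (at (\<tau> p))" if "p \<in> \<Omega>" for p
    using f[OF \<tau>_in[OF that]] .
  show "partial1 U (\<Phi> q) = f1 (snd q) * \<tau>x q" "partial2 U (\<Phi> q) = f1 (snd q) * \<tau>y q"
    using gradient_compose_real[OF open_\<Omega> p U has_derivative_\<tau>[OF p] f'[OF p]] q by simp_all
  have "partial1 (partial1 U) (\<Phi> q) + partial2 (partial2 U) (\<Phi> q)
      = f2 (snd q) * ((\<tau>x q)\<^sup>2 + (\<tau>y q)\<^sup>2)
        + f1 (snd q) * (fst (d\<Psi> q (1, 0)) * \<tau>x\<sigma> q + snd (d\<Psi> q (1, 0)) * \<tau>xt q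
                        + (fst (d\<Psi> q (0, 1)) * \<tau>y\<sigma> q + snd (d\<Psi> q (0, 1)) * \<tau>yt q))"
    using laplacian_compose_real[OF open_\<Omega> p U has_derivative_\<tau> has_derivative_gradient_\<tau>[OF q] f'
        f1[OF snd_in[OF q], folded \<tau>_\<Phi>[OF q]]] q
    by simp
  also have "\<dots> = f2 (snd q) * ((L q)\<^sup>2 / (J q)\<^sup>2) + f1 (snd q) * (- ((L q)\<^sup>2 / (J q)\<^sup>2) * K q)"
    by (simp only: norm_gradient_\<tau> laplacian_\<tau>_eq[OF q])
  also have "\<dots> = (L q)\<^sup>2 / (J q)\<^sup>2 * (f2 (snd q) - f1 (snd q) * K q)"
    using q by (simp add: field_simps)
  finally show "partial1 (partial1 U) (\<Phi> q) + partial2 (partial2 U) (\<Phi> q)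
      = (L q)\<^sup>2 / (J q)\<^sup>2 * (f2 (snd q) - f1 (snd q) * K q)" .
qed

lemma level_sets_compose_\<tau>:
  assumes f: "inj_on f {-\<epsilon><..<\<epsilon>}" and U: "\<And>p. p \<in> \<Omega> \<Longrightarrow> U p = f (\<tau> p)"
  shows "{{p \<in> \<Omega>. U p = c} | c. c \<in> U ` \<Omega>} = {(\<lambda>\<sigma>. \<Phi> (\<sigma>, t)) ` UNIV | t. t \<in> {-\<epsilon><..<\<epsilon>}}"
proof -
  have level: "{p \<in> \<Omega>. U p = f t} = (\<lambda>\<sigma>. \<Phi> (\<sigma>, t)) ` UNIV" if t: "t \<in> {-\<epsilon><..<\<epsilon>}" for t
  proof (intro equalityI subsetI)
    fix p assume "p \<in> {p \<in> \<Omega>. U p = f t}"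
    then have p: "p \<in> \<Omega>" and "U p = f t"
      by auto
    then have "\<tau> p = t"
      using inj_onD[OF f _ \<tau>_in[OF p] t] U[OF p] by simp
    then have "p = \<Phi> (fst (\<Psi> p), t)"
      using \<Phi>_\<Psi>[OF p] by (metis \<tau>_def prod.collapse)
    then show "p \<in> (\<lambda>\<sigma>. \<Phi> (\<sigma>, t)) ` UNIV" by blast
  next
    fix p assume "p \<in> (\<lambda>\<sigma>. \<Phi> (\<sigma>, t)) ` UNIV"
    then obtain \<sigma> where p: "p = \<Phi> (\<sigma>, t)" by blast
    have "(\<sigma>, t) \<in> D" using t by simp
    then show "p \<in> {p \<in> \<Omega>. U p = f t}"
      using U[OF \<Phi>_in_\<Omega>] by (simp add: p \<Phi>_in_\<Omega>)
  qed
  have image_U: "U ` \<Omega> = f ` {-\<epsilon><..<\<epsilon>}"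
    using U image_\<tau> by (auto simp: image_image[symmetric] cong: image_cong)
  show ?thesis
    unfolding Setcompr_eq_image image_U image_image by (rule image_cong[OF refl level])
qed

lemma constant_on_curves:
  assumes LS: "{{p \<in> \<Omega>. U p = c} | c. c \<in> U ` \<Omega>} = {(\<lambda>\<sigma>. \<Phi> (\<sigma>, t)) ` UNIV | t. t \<in> {-\<epsilon><..<\<epsilon>}}"
    and t: "t \<in> {-\<epsilon><..<\<epsilon>}"
  shows "U (\<Phi> (\<sigma>, t)) = U (\<Phi> (\<sigma>', t))"
proof -
  obtain c where "(\<lambda>\<sigma>. \<Phi> (\<sigma>, t)) ` UNIV = {p \<in> \<Omega>. U p = c}"
    using LS t by blast
  then have "U (\<Phi> (\<sigma>, t)) = c" "U (\<Phi> (\<sigma>', t)) = c"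
    by blast+
  then show ?thesis by simp
qed

lemma gradient_\<tau>_nonzero: "q \<in> D \<Longrightarrow> (\<tau>x q, \<tau>y q) \<noteq> (0, 0)"
  using norm_gradient_\<tau>[of q] L_nonzero[of q] J_nonzero[of q] by auto

lemma harmonic_level_function_imp_K_constant:
  assumes H: "harmonic_on \<Omega> U" and CF: "critical_point_free_on \<Omega> U"
    and LS: "{{p \<in> \<Omega>. U p = c} | c. c \<in> U ` \<Omega>} = {(\<lambda>\<sigma>. \<Phi> (\<sigma>, t)) ` UNIV | t. t \<in> {-\<epsilon><..<\<epsilon>}}"
    and t: "t \<in> {-\<epsilon><..<\<epsilon>}"
  shows "K (\<sigma>1, t) = K (\<sigma>2, t)"
proof -
  define f where "f s = U (\<Phi> (0, s))" for s
  have U: "U p = f (\<tau> p)" if p: "p \<in> \<Omega>" for p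
  proof -
    have "U p = U (\<Phi> (fst (\<Psi> p), \<tau> p))"
      using p by (simp add: \<tau>_def)
    also have "\<dots> = f (\<tau> p)"
      unfolding f_def using LS \<tau>_in[OF p] by (rule constant_on_curves)
    finally show ?thesis .
  qed
  have curve: "((\<lambda>s. \<Phi> (0, s)) has_vector_derivative \<Phi>' (0, s) (0, 1)) (at s)"
    and curve': "(\<lambda>s. \<Phi>' (0, s) (0, 1)) differentiable (at s)"
    if "s \<in> {-\<epsilon><..<\<epsilon>}" for s
  proof -
    have q: "(0, s) \<in> D" using that by simp
    have i: "((\<lambda>s. (0::real, s)) has_derivative (\<lambda>h. (0, h))) (at s)"
      by (auto intro!: derivative_eq_intros)
    show "((\<lambda>s. \<Phi> (0, s)) has_vector_derivative \<Phi>' (0, s) (0, 1)) (at s)"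
      unfolding has_vector_derivative_def
      by (rule has_derivative_eq_rhs[OF has_derivative_compose[OF i has_derivative_\<Phi>[OF q]]])
        (simp add: fun_eq_iff \<Phi>'_apply)
    show "(\<lambda>s. \<Phi>' (0, s) (0, 1)) differentiable (at s)"
      using blinfun.FDERIV[OF has_derivative_compose[OF i has_derivative_\<Phi>'[OF q]] has_derivative_const]
      by (rule differentiableI)
  qed
  obtain f1 where f': "\<And>s. s \<in> {-\<epsilon><..<\<epsilon>} \<Longrightarrow> (f has_real_derivative f1 s) (at s)"
    and f'': "\<And>s. s \<in> {-\<epsilon><..<\<epsilon>} \<Longrightarrow> (f1 has_real_derivative deriv f1 s) (at s)"
    using derivative_along_curve_differentiable[of \<Omega> U "{-\<epsilon><..<\<epsilon>}" "\<lambda>s. \<Phi> (0, s)", OF _ _ curve curve'] H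
    unfolding harmonic_on_def f_def by (force simp: \<Phi>_in_\<Omega> DERIV_deriv_iff_real_differentiable)
  have "K (\<sigma>, t) = deriv f1 t / f1 t" for \<sigma>
  proof -
    have q: "(\<sigma>, t) \<in> D" using t by simp
    note gradient = laplacian_compose_\<tau>(1,2)[OF U f' f'' q]
      and laplacian = laplacian_compose_\<tau>(3)[OF U f' f'' q]
    have "f1 t \<noteq> 0"
      using CF \<Phi>_in_\<Omega>[OF q] gradient by (auto simp: critical_point_free_on_def)
    moreover have "deriv f1 t - f1 t * K (\<sigma>, t) = 0"
      using H \<Phi>_in_\<Omega>[OF q] laplacian q by (simp add: harmonic_on_def)
    ultimately show ?thesis
      by (simp add: field_simps)
  qed
  then show ?thesis by simp
qed

lemma C2_on_\<tau>: "C2_on \<Omega> \<tau>"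
  unfolding \<tau>_def[abs_def] by (rule C2_on_bounded_linear_compose[OF bounded_linear_snd C2_inverse])

lemma K_constant_imp_harmonic_level_function:
  assumes K: "\<And>t \<sigma>1 \<sigma>2. t \<in> {-\<epsilon><..<\<epsilon>} \<Longrightarrow> K (\<sigma>1, t) = K (\<sigma>2, t)"
  shows "\<exists>U. harmonic_on \<Omega> U \<and> critical_point_free_on \<Omega> U \<and>
           {{p \<in> \<Omega>. U p = c} | c. c \<in> U ` \<Omega>} = {(\<lambda>\<sigma>. \<Phi> (\<sigma>, t)) ` UNIV | t. t \<in> {-\<epsilon><..<\<epsilon>}}"
proof -
  have K0: "continuous_on {-\<epsilon><..<\<epsilon>} (\<lambda>t. K (0, t))"
    by (rule continuous_on_compose2[OF continuous_on_K]) (auto intro!: continuous_intros)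
  then obtain f f1 where f': "\<And>t. t \<in> {-\<epsilon><..<\<epsilon>} \<Longrightarrow> (f has_real_derivative f1 t) (at t)"
    and f'': "\<And>t. t \<in> {-\<epsilon><..<\<epsilon>} \<Longrightarrow> (f1 has_real_derivative f1 t * K (0, t)) (at t)"
    and pos: "\<And>t. f1 t > 0" and cont: "continuous_on {-\<epsilon><..<\<epsilon>} f1" and inj: "inj_on f {-\<epsilon><..<\<epsilon>}"
    by (rule exists_injective_solution_f''_eq_g_f') blast
  define U where "U p = f (\<tau> p)" for p
  have U: "U p = f (\<tau> p)" if "p \<in> \<Omega>" for p
    by (simp add: U_def)
  have f2: "continuous_on {-\<epsilon><..<\<epsilon>} (\<lambda>t. f1 t * K (0, t))"
    by (intro continuous_intros cont K0)
  have "C2_on \<Omega> U"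
    unfolding U_def[abs_def] by (rule C2_on_compose_real[OF C2_on_\<tau> _ f' f'' f2]) (simp add: image_\<tau>)
  moreover have "partial1 (partial1 U) p + partial2 (partial2 U) p = 0" if p: "p \<in> \<Omega>" for p
    using laplacian_compose_\<tau>(3)[OF U f' f'' \<Psi>_in_D[OF p]] p
      K[OF snd_in[OF \<Psi>_in_D[OF p]], of "fst (\<Psi> p)" 0]
    by simp
  ultimately have "harmonic_on \<Omega> U"
    by (simp add: harmonic_on_def)
  moreover have "critical_point_free_on \<Omega> U"
    unfolding critical_point_free_on_def
  proof
    fix p assume "p \<in> \<Omega>"
    then obtain q where q: "q \<in> D" "p = \<Phi> q"
      using image_\<Phi> by blast
    show "(partial1 U p, partial2 U p) \<noteq> (0, 0)"
      using laplacian_compose_\<tau>(1,2)[OF U f' f'' q(1)] gradient_\<tau>_nonzero[OF q(1)] pos[of "snd q"] q(2)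
      by auto
  qed
  ultimately show ?thesis
    using level_sets_compose_\<tau>[OF inj U] by blast
qed

end

theorem theorem1:
  fixes \<Phi> :: "real \<times> real \<Rightarrow> real \<times> real" and \<epsilon> :: real and \<Omega> :: "(real \<times> real) set"
  defines "D \<equiv> (UNIV :: real set) \<times> {-\<epsilon><..<\<epsilon>}"
  assumes eps: "\<epsilon> > 0"
    and C2: "C2_on D \<Phi>"
    and inj: "inj_on \<Phi> D"
    and onto: "\<Phi> ` D = \<Omega>"
    and C2_inv: "C2_on \<Omega> (inv_into D \<Phi>)"
    and orient: "\<forall>q\<in>D. jac \<Phi> q > 0"
  shows "(\<exists>U :: real \<times> real \<Rightarrow> real.
            harmonic_on \<Omega> U \<and> critical_point_free_on \<Omega> U \<and>
            {{p \<in> \<Omega>. U p = c} | c. c \<in> U ` \<Omega>} =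
            {(\<lambda>\<sigma>. \<Phi> (\<sigma>, t)) ` UNIV | t. t \<in> {-\<epsilon><..<\<epsilon>}})
         \<longleftrightarrow>
         (\<forall>t \<in> {-\<epsilon><..<\<epsilon>}. \<forall>\<sigma>1 \<sigma>2.
            dphi_ds D \<Phi> (\<sigma>1, t) + kappa \<Phi> (\<sigma>1, t) * phi \<Phi> (\<sigma>1, t) =
            dphi_ds D \<Phi> (\<sigma>2, t) + kappa \<Phi> (\<sigma>2, t) * phi \<Phi> (\<sigma>2, t))"
proof -
  obtain \<Phi>' \<Phi>'' where "\<And>q. q \<in> D \<Longrightarrow> (\<Phi> has_derivative blinfun_apply (\<Phi>' q)) (at q)"
    and "\<And>q. q \<in> D \<Longrightarrow> (\<Phi>' has_derivative blinfun_apply (\<Phi>'' q)) (at q)"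
    and "continuous_on D \<Phi>''"
    using C2 by (rule C2_onE) blast
  then interpret level_curve_parametrisation \<Phi> \<epsilon> \<Omega> D \<Phi>' \<Phi>''
    by unfold_locales (use D_def inj onto C2_inv orient in auto)
  have "dphi_ds D \<Phi> q + kappa \<Phi> q * phi \<Phi> q = K q" for q
    by (simp add: K_def)
  then show ?thesis
    using harmonic_level_function_imp_K_constant K_constant_imp_harmonic_level_function by auto
qed

end
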